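(* Let $\mathbb{F}$ be a field, $d\ge 1$, and $P_d=\mathbb{F}[x_1,\dots,x_d]$. For $k\ge 3$ let $D_k$ be the set of monomials of degree $k$ in $x_1,\dots,x_{k-1}$ not divisible by $x_{k-1}^2$ (if $d<k-1$, $D_k$ is the set of all monomials of degree $k$ in $x_1,\dots,x_d$), and let $K_d\subseteq P_d$ be the ideal generated by $x_1^3,\dots,x_d^3$ and $\bigcup_{k=3}^{d+1}D_k$. Let $\mu\in P_d$ be a monomial. (a) If $\mu\notin K_d$ and $\deg(\mu)\le d-1$, then there exists a monomial $\widetilde\mu\in P_d$ that is a multiple of $\mu$ of degree $d$, with $\widetilde\mu\notin K_d$, and such that $\widetilde\mu$ ends in $x_d$ or in $x_d^2$. (b) If $\mu\notin K_d$, $\deg(\mu)=d$, and $\mu$ does not end in $x_{d-1}^2$, then there exists a monomial $\widetilde\mu\in P_d$ that is a multiple of $\mu$ of degree $d+1$ with $\widetilde\mu\notin K_d$.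
   Context: A monomial $m$ is said to end in $x_j^{e}$ if $m=x_1^{a_1}\cdots x_{j-1}^{a_{j-1}}x_j^{e}$, i.e. $m$ involves no variable $x_i$ with $i>j$ and the exponent of $x_j$ in $m$ is $e$. *)

theory Defs
  imports "HOL-Library.Poly_Mapping"
begin

text \<open>Polynomials over a field in variables x_1, x_2, ... : maps from exponent
vectors (nat =>0 nat) to coefficients.  Variable x_i has index i.\<close>
type_synonym 'a mpoly = "(nat \<Rightarrow>\<^sub>0 nat) \<Rightarrow>\<^sub>0 'a"

definition mon :: "(nat \<Rightarrow>\<^sub>0 nat) \<Rightarrow> 'a::field mpoly" where
  "mon \<alpha> = Poly_Mapping.single \<alpha> 1"

definition var :: "nat \<Rightarrow> 'a::field mpoly" where
  "var i = mon (Poly_Mapping.single i 1)"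

definition mdeg :: "(nat \<Rightarrow>\<^sub>0 nat) \<Rightarrow> nat" where
  "mdeg \<alpha> = (\<Sum>i\<in>Poly_Mapping.keys \<alpha>. Poly_Mapping.lookup \<alpha> i)"

definition P :: "nat \<Rightarrow> 'a::field mpoly set" where
  "P d = {p. \<forall>\<alpha>\<in>Poly_Mapping.keys p. Poly_Mapping.keys \<alpha> \<subseteq> {1..d}}"

definition monomials :: "nat \<Rightarrow> 'a::field mpoly set" where
  "monomials d = {mon \<alpha> | \<alpha>. Poly_Mapping.keys \<alpha> \<subseteq> {1..d}}"

definition ends_in :: "(nat \<Rightarrow>\<^sub>0 nat) \<Rightarrow> nat \<Rightarrow> nat \<Rightarrow> bool" where
  "ends_in \<alpha> j e \<longleftrightarrow> Poly_Mapping.keys \<alpha> \<subseteq> {1..j} \<and> Poly_Mapping.lookup \<alpha> j = e"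

definition D :: "nat \<Rightarrow> nat \<Rightarrow> 'a::field mpoly set" where
  "D d k = (if d < k - 1
     then {mon \<alpha> | \<alpha>. Poly_Mapping.keys \<alpha> \<subseteq> {1..d} \<and> mdeg \<alpha> = k}
     else {mon \<alpha> | \<alpha>. Poly_Mapping.keys \<alpha> \<subseteq> {1..k-1} \<and> mdeg \<alpha> = k \<and> Poly_Mapping.lookup \<alpha> (k-1) < 2})"

definition ideal_gen :: "'a::comm_ring_1 set \<Rightarrow> 'a set \<Rightarrow> 'a set" where
  "ideal_gen R G = {p. \<exists>S c. finite S \<and> S \<subseteq> G \<and> (\<forall>g\<in>S. c g \<in> R) \<and> p = (\<Sum>g\<in>S. c g * g)}"

definition K :: "nat \<Rightarrow> 'a::field mpoly set" where
  "K d = ideal_gen (P d)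
     ({var i ^ 3 | i. 1 \<le> i \<and> i \<le> d} \<union> (\<Union>k\<in>{3..d+1}. D d k))"

end

theory Submission
  imports Defs
begin

text \<open>A monomial lies in the monomial ideal K d iff one of the generators divides it, so membership
  depends only on the exponent vector f: x^f lies outside K d iff every f_i is at most 2 and
  f_1 + ... + f_(j-1) + min f_j 1 \<le> j for 2 \<le> j \<le> d, the left-hand side being the largest
  degree of a divisor of x^f in x_1, ..., x_j not divisible by x_j^2 (compare D_(j+1)).
  Multiplying by x_i preserves this as long as the constraints at i and beyond have slack; if
  f_1 + ... + f_m < m, the last index i \<le> m with f_i < 2 is such a position. Iterating this,
  after first making x_d appear, gives (a). One more step at degree d gives (b), since an
  admissible exponent vector of degree d without x_d ends in x_(d-1)^2.\<close>

lemma mon_mult: "(mon \<alpha> :: 'a::field mpoly) * mon \<beta> = mon (\<alpha> + \<beta>)"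
  by (simp add: mon_def mult_single)

lemma var_power: "(var i :: 'a::field mpoly) ^ n = mon (Poly_Mapping.single i n)"
  by (induction n) (simp_all add: var_def mon_def mult_single flip: single_add)

lemma mon_in_P: "Poly_Mapping.keys \<alpha> \<subseteq> {1..d} \<Longrightarrow> (mon \<alpha> :: 'a::field mpoly) \<in> P d"
  by (auto simp: P_def mon_def)

lemma mdeg_eq_sum:
  assumes "finite A" "Poly_Mapping.keys \<alpha> \<subseteq> A"
  shows "mdeg \<alpha> = sum (Poly_Mapping.lookup \<alpha>) A"
  unfolding mdeg_def
  by (rule sum.mono_neutral_left) (use assms in \<open>auto simp: in_keys_iff\<close>)

lemma mdeg_add: "mdeg (\<alpha> + \<beta>) = mdeg \<alpha> + mdeg \<beta>"
proof -
  let ?A = "Poly_Mapping.keys \<alpha> \<union> Poly_Mapping.keys \<beta>"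
  have "mdeg (\<alpha> + \<beta>) = sum (Poly_Mapping.lookup (\<alpha> + \<beta>)) ?A"
    using keys_add[of \<alpha> \<beta>] by (intro mdeg_eq_sum) auto
  also have "\<dots> = mdeg \<alpha> + mdeg \<beta>"
    by (simp add: lookup_add sum.distrib mdeg_eq_sum[of ?A])
  finally show ?thesis .
qed

lemma mdeg_single: "mdeg (Poly_Mapping.single i n) = n"
  by (simp add: mdeg_eq_sum[of "{i}"])

lemma lookup_add_single:
  "Poly_Mapping.lookup (\<alpha> + Poly_Mapping.single i 1) = (Poly_Mapping.lookup \<alpha>)(i := Suc (Poly_Mapping.lookup \<alpha> i))"
  by (auto simp: lookup_add lookup_single)

lemma keys_add_subset:
  "Poly_Mapping.keys \<alpha> \<subseteq> A \<Longrightarrow> Poly_Mapping.keys \<beta> \<subseteq> A \<Longrightarrow> Poly_Mapping.keys (\<alpha> + \<beta>) \<subseteq> A"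
  using keys_add[of \<alpha> \<beta>] by blast

lemma mon_add_eq_mult_mon:
  assumes "Poly_Mapping.keys \<delta> \<subseteq> {1..d}"
  shows "\<exists>q\<in>P d. (mon (\<alpha> + \<delta>) :: 'a::field mpoly) = q * mon \<alpha>"
proof
  show "(mon (\<alpha> + \<delta>) :: 'a mpoly) = mon \<delta> * mon \<alpha>"
    by (simp add: mon_mult add.commute)
qed (rule mon_in_P[OF assms])

lemma lookup_mult_mon_eq_0:
  assumes "\<not> Poly_Mapping.lookup \<gamma> \<le> Poly_Mapping.lookup \<alpha>"
  shows "Poly_Mapping.lookup (c * (mon \<gamma> :: 'a::field mpoly)) \<alpha> = 0"
proof -
  have "\<alpha> \<noteq> \<delta> + \<gamma>" for \<delta>
    using assms by (auto simp: le_fun_def lookup_add)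
  then have "(Poly_Mapping.lookup (mon \<gamma> :: 'a mpoly) q when \<alpha> = \<delta> + q) = 0" for \<delta> q
    by (auto simp: mon_def lookup_single when_def)
  then show ?thesis
    by (simp add: lookup_mult)
qed

lemma mon_in_ideal_gen_mon_iff:
  assumes "Poly_Mapping.keys \<alpha> \<subseteq> {1..d}"
  shows "(mon \<alpha> :: 'a::field mpoly) \<in> ideal_gen (P d) (mon ` \<Gamma>)
    \<longleftrightarrow> (\<exists>\<gamma>\<in>\<Gamma>. Poly_Mapping.lookup \<gamma> \<le> Poly_Mapping.lookup \<alpha>)"
proof
  assume "(mon \<alpha> :: 'a mpoly) \<in> ideal_gen (P d) (mon ` \<Gamma>)"
  then obtain S c where S: "S \<subseteq> mon ` \<Gamma>" and \<alpha>: "(mon \<alpha> :: 'a mpoly) = (\<Sum>g\<in>S. c g * g)"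
    unfolding ideal_gen_def by blast
  show "\<exists>\<gamma>\<in>\<Gamma>. Poly_Mapping.lookup \<gamma> \<le> Poly_Mapping.lookup \<alpha>"
  proof (rule ccontr)
    assume "\<not> ?thesis"
    then have "Poly_Mapping.lookup (c g * g) \<alpha> = 0" if "g \<in> S" for g
      using S that by (auto intro: lookup_mult_mon_eq_0)
    then have "Poly_Mapping.lookup (mon \<alpha> :: 'a mpoly) \<alpha> = 0"
      by (simp add: \<alpha> lookup_sum)
    then show False
      by (simp add: mon_def)
  qed
next
  assume "\<exists>\<gamma>\<in>\<Gamma>. Poly_Mapping.lookup \<gamma> \<le> Poly_Mapping.lookup \<alpha>"
  then obtain \<gamma> where \<gamma>: "\<gamma> \<in> \<Gamma>" "Poly_Mapping.lookup \<gamma> \<le> Poly_Mapping.lookup \<alpha>"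
    by blast
  define \<delta> where "\<delta> = \<alpha> - \<gamma>"
  have "\<alpha> = \<delta> + \<gamma>"
    using \<gamma>(2) by (intro poly_mapping_eqI) (simp add: \<delta>_def lookup_add lookup_minus le_fun_def)
  then have "(mon \<alpha> :: 'a mpoly) = (\<Sum>g\<in>{mon \<gamma>}. mon \<delta> * g)"
    by (simp add: mon_mult)
  moreover have "Poly_Mapping.keys \<delta> \<subseteq> {1..d}"
    using assms by (auto simp: \<delta>_def in_keys_iff lookup_minus)
  ultimately show "(mon \<alpha> :: 'a mpoly) \<in> ideal_gen (P d) (mon ` \<Gamma>)"
    unfolding ideal_gen_def using \<gamma>(1) mon_in_P
    by (intro CollectI exI[of _ "{mon \<gamma>}"] exI[of _ "\<lambda>_. mon \<delta>"]) auto
qed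

text \<open>The second set collects the exponents of D d (j + 1) for 2 \<le> j \<le> d; for these the
  first branch in the definition of D is never taken.\<close>
definition K_exps :: "nat \<Rightarrow> (nat \<Rightarrow>\<^sub>0 nat) set" where
  "K_exps d = {Poly_Mapping.single i 3 | i. i \<in> {1..d}} \<union>
     {\<gamma>. \<exists>j\<in>{2..d}. Poly_Mapping.keys \<gamma> \<subseteq> {1..j} \<and> mdeg \<gamma> = Suc j \<and> Poly_Mapping.lookup \<gamma> j \<le> 1}"

lemma K_eq_ideal_gen_K_exps: "(K d :: 'a::field mpoly set) = ideal_gen (P d) (mon ` K_exps d)"
proof -
  let ?E = "\<lambda>j. {\<gamma>. Poly_Mapping.keys \<gamma> \<subseteq> {1..j} \<and> mdeg \<gamma> = Suc j \<and> Poly_Mapping.lookup \<gamma> j \<le> 1}"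
  have "{3..d+1} = Suc ` {2..d}"
    by (simp add: image_Suc_atLeastAtMost)
  then have "(\<Union>k\<in>{3..d+1}. D d k :: 'a mpoly set) = (\<Union>j\<in>{2..d}. D d (Suc j))"
    by (simp only: image_image)
  also have "\<dots> = (\<Union>j\<in>{2..d}. mon ` ?E j)"
    by (intro SUP_cong) (auto simp: D_def)
  also have "\<dots> = mon ` {\<gamma>. \<exists>j\<in>{2..d}. \<gamma> \<in> ?E j}"
    by blast
  finally have "(\<Union>k\<in>{3..d+1}. D d k :: 'a mpoly set) = mon ` {\<gamma>. \<exists>j\<in>{2..d}. \<gamma> \<in> ?E j}" .
  moreover have "{var i ^ 3 | i. 1 \<le> i \<and> i \<le> d} = (mon ` {Poly_Mapping.single i 3 | i. i \<in> {1..d}} :: 'a mpoly set)"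
    by (auto simp: var_power)
  ultimately show ?thesis
    unfolding K_def K_exps_def image_Un by simp
qed

definition admissible :: "nat \<Rightarrow> (nat \<Rightarrow> nat) \<Rightarrow> bool" where
  "admissible d f \<longleftrightarrow> (\<forall>i\<in>{1..d}. f i \<le> 2) \<and> (\<forall>j\<in>{2..d}. sum f {1..<j} + min (f j) 1 \<le> j)"

lemma exists_le_sum_eq:
  fixes h :: "'b \<Rightarrow> nat"
  assumes "finite A" "n \<le> sum h A"
  shows "\<exists>g\<le>h. sum g A = n"
  using assms
proof (induction A arbitrary: n rule: finite_induct)
  case empty
  then show ?case by auto
next
  case (insert a A)
  show ?case
  proof (cases "n \<le> sum h A")
    case True
    then obtain g where "g \<le> h" "sum g A = n"
      using insert.IH by blast
    moreover have "sum (g(a := 0)) A = sum g A"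
      using insert.hyps by (intro sum.cong) auto
    ultimately show ?thesis
      using insert.hyps by (intro exI[of _ "g(a := 0)"]) (auto simp: le_fun_def)
  next
    case False
    have "sum (h(a := n - sum h A)) A = sum h A"
      using insert.hyps by (intro sum.cong) auto
    then show ?thesis
      using insert False by (intro exI[of _ "h(a := n - sum h A)"]) (auto simp: le_fun_def)
  qed
qed

lemma not_admissible_if_K_exp_le:
  assumes "\<gamma> \<in> K_exps d" "Poly_Mapping.lookup \<gamma> \<le> f"
  shows "\<not> admissible d f"
  using assms(1) unfolding K_exps_def
proof (elim UnE CollectE exE conjE bexE)
  fix i assume "\<gamma> = Poly_Mapping.single i 3" "i \<in> {1..d}"
  moreover from this have "3 \<le> f i"
    using assms(2) by (auto simp: le_fun_def dest: spec[of _ i])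
  ultimately show "\<not> admissible d f"
    by (auto simp: admissible_def intro!: bexI[of _ i])
next
  fix j assume j: "j \<in> {2..d}" and \<gamma>: "Poly_Mapping.keys \<gamma> \<subseteq> {1..j}" "mdeg \<gamma> = Suc j"
    "Poly_Mapping.lookup \<gamma> j \<le> 1"
  have "Suc j = sum (Poly_Mapping.lookup \<gamma>) {1..<Suc j}"
    using \<gamma>(1,2) mdeg_eq_sum[of "{1..<Suc j}" \<gamma>] by (simp add: atLeastLessThanSuc_atLeastAtMost)
  also have "\<dots> = sum (Poly_Mapping.lookup \<gamma>) {1..<j} + Poly_Mapping.lookup \<gamma> j"
    using j by simp
  also have "\<dots> \<le> sum f {1..<j} + min (f j) 1"
    using assms(2) \<gamma>(3) by (intro add_mono sum_mono) (auto simp: le_fun_def)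
  finally have "\<not> sum f {1..<j} + min (f j) 1 \<le> j"
    by simp
  then show "\<not> admissible d f"
    using j unfolding admissible_def by blast
qed

lemma K_exp_le_if_not_admissible:
  assumes "\<not> admissible d f"
  shows "\<exists>\<gamma>\<in>K_exps d. Poly_Mapping.lookup \<gamma> \<le> f"
proof -
  consider (cube) i where "i \<in> {1..d}" "3 \<le> f i"
    | (degree) j where "j \<in> {2..d}" "Suc j \<le> sum f {1..<j} + min (f j) 1"
    using assms by (force simp: admissible_def not_le)
  then show ?thesis
  proof cases
    case cube
    then show ?thesis
      by (intro bexI[of _ "Poly_Mapping.single i 3"]) (auto simp: K_exps_def le_fun_def lookup_single when_def)
  next
    case degree
    define h where "h i = (if i \<in> {1..<j} then f i else if i = j then min (f j) 1 else 0)" for i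
    have "sum h {1..j} = sum f {1..<j} + min (f j) 1"
      using degree(1) by (simp add: h_def atLeastLessThanSuc_atLeastAtMost[symmetric])
    then obtain g where g: "g \<le> h" "sum g {1..j} = Suc j"
      using exists_le_sum_eq[of "{1..j}" "Suc j" h] degree(2) by auto
    have g_supp: "i \<in> {1..j}" if "g i \<noteq> 0" for i
      using that degree(1) le_funD[OF g(1), of i] by (auto simp: h_def split: if_splits)
    then have "{i. g i \<noteq> 0} \<subseteq> {1..j}"
      by blast
    then have "finite {i. g i \<noteq> 0}"
      using finite_subset by blast
    then obtain \<gamma> where \<gamma>: "Poly_Mapping.lookup \<gamma> = g"
      using lookup_Abs_poly_mapping by blast
    have "Poly_Mapping.keys \<gamma> \<subseteq> {1..j}"
      using g_supp by (auto simp: \<gamma> in_keys_iff)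
    moreover have "Poly_Mapping.lookup \<gamma> j \<le> 1"
      using le_funD[OF g(1), of j] by (simp add: \<gamma> h_def)
    ultimately have "\<gamma> \<in> K_exps d"
      using degree(1) g(2) mdeg_eq_sum[of "{1..j}" \<gamma>] unfolding K_exps_def by (auto simp: \<gamma>)
    moreover have "h \<le> f"
      by (auto simp: le_fun_def h_def)
    ultimately show ?thesis
      using g(1) \<gamma> order.trans by metis
  qed
qed

lemma mon_notin_K_iff_admissible:
  assumes "Poly_Mapping.keys \<alpha> \<subseteq> {1..d}"
  shows "(mon \<alpha> :: 'a::field mpoly) \<notin> K d \<longleftrightarrow> admissible d (Poly_Mapping.lookup \<alpha>)"
  unfolding K_eq_ideal_gen_K_exps mon_in_ideal_gen_mon_iff[OF assms]
  using not_admissible_if_K_exp_le K_exp_le_if_not_admissible by blast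

lemma sum_fun_upd_Suc:
  "finite A \<Longrightarrow> sum (f(i := Suc (f i))) A = sum f A + (if i \<in> A then 1 else 0)"
proof -
  assume "finite A"
  have "f(i := Suc (f i)) = (\<lambda>x. f x + (if x = i then 1 else 0))"
    by auto
  then show ?thesis
    using \<open>finite A\<close> by (simp add: sum.distrib)
qed

lemma admissible_fun_upd_Suc:
  assumes "admissible d f" "i \<in> {1..d}" "f i \<le> 1" "sum f {1..<i} < i"
    and "\<forall>j\<in>{i<..d}. sum f {1..<j} + min (f j) 1 < j"
  shows "admissible d (f(i := Suc (f i)))"
  unfolding admissible_def
proof (intro conjI ballI)
  fix k assume "k \<in> {1..d}"
  then show "(f(i := Suc (f i))) k \<le> 2"
    using assms(1,3) by (auto simp: admissible_def)
next
  fix j assume j: "j \<in> {2..d}"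
  have sum_upd: "sum (f(i := Suc (f i))) {1..<j} = sum f {1..<j} + (if i < j then 1 else 0)"
    using assms(2) by (subst sum_fun_upd_Suc) auto
  consider "j < i" | "j = i" | "i < j"
    by linarith
  then show "sum (f(i := Suc (f i))) {1..<j} + min ((f(i := Suc (f i))) j) 1 \<le> j"
  proof cases
    case 1
    then show ?thesis
      using sum_upd assms(1) j by (simp add: admissible_def)
  next
    case 2
    then show ?thesis
      using sum_upd assms(4) by simp
  next
    case 3
    then show ?thesis
      using sum_upd bspec[OF assms(5), of j] j by simp
  qed
qed

lemma admissible_extend_below:
  assumes "admissible d f" "m \<le> d" "sum f {1..m} < m"
    and "\<forall>j\<in>{m<..d}. sum f {1..<j} + min (f j) 1 < j"
  shows "\<exists>i\<in>{1..m}. admissible d (f(i := Suc (f i)))"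
  using assms(2-4)
proof (induction m)
  case 0
  then show ?case by simp
next
  case (Suc m)
  have "f (Suc m) \<le> 2"
    using assms(1) Suc.prems(1) by (auto simp: admissible_def)
  then consider "f (Suc m) \<le> 1" | "f (Suc m) = 2"
    by linarith
  then show ?case
  proof cases
    case 1
    have "admissible d (f(Suc m := Suc (f (Suc m))))"
      using Suc.prems 1 by (intro admissible_fun_upd_Suc[OF assms(1)]) (auto simp: atLeastLessThanSuc_atLeastAtMost)
    moreover have "Suc m \<in> {1..Suc m}"
      by simp
    ultimately show ?thesis
      by blast
  next
    case 2
    have "m \<le> d" "sum f {1..m} < m"
      using Suc.prems(1,2) 2 by auto
    moreover have "\<forall>j\<in>{m<..d}. sum f {1..<j} + min (f j) 1 < j"
    proof
      fix j assume "j \<in> {m<..d}"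
      then consider "j = Suc m" | "j \<in> {Suc m<..d}"
        by fastforce
      then show "sum f {1..<j} + min (f j) 1 < j"
        using Suc.prems(2,3) 2 by cases (auto simp: atLeastLessThanSuc_atLeastAtMost)
    qed
    ultimately show ?thesis
      using Suc.IH by fastforce
  qed
qed

lemma admissible_extend:
  "admissible d f \<Longrightarrow> sum f {1..d} < d \<Longrightarrow> \<exists>i\<in>{1..d}. admissible d (f(i := Suc (f i)))"
  by (rule admissible_extend_below) auto

lemma admissible_extend_past_full_degree:
  assumes "admissible d f" "1 \<le> d" "sum f {1..d} = d" "f d \<noteq> 0"
  shows "\<exists>i\<in>{1..d}. admissible d (f(i := Suc (f i)))"
proof -
  obtain m where d: "d = Suc m"
    using assms(2) by (cases d) auto
  have sum_d: "sum f {1..<d} + f d = d"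
    using assms(3) by (simp add: d atLeastLessThanSuc_atLeastAtMost)
  have "f d \<le> 2"
    using assms(1,2) by (auto simp: admissible_def)
  then consider "f d = 1" | "f d = 2"
    using assms(4) by linarith
  then show ?thesis
  proof cases
    case 1
    then have "admissible d (f(d := Suc (f d)))"
      using assms(2) sum_d by (intro admissible_fun_upd_Suc[OF assms(1)]) auto
    then show ?thesis
      using assms(2) by auto
  next
    case 2
    have "{m<..d} = {d}"
      using d by auto
    then have "\<exists>i\<in>{1..m}. admissible d (f(i := Suc (f i)))"
      using sum_d 2 by (intro admissible_extend_below[OF assms(1)]) (auto simp: d atLeastLessThanSuc_atLeastAtMost)
    then show ?thesis
      using d by auto
  qed
qed

lemma admissible_full_degree_top_zero:
  assumes "admissible d f" "1 \<le> d" "sum f {1..d} = d" "f d = 0"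
  shows "f (d - 1) = 2"
proof -
  obtain m where d: "d = Suc m"
    using assms(2) by (cases d) auto
  have sum_m: "sum f {1..m} = Suc m"
    using assms(3,4) by (simp add: d)
  then obtain k where m: "m = Suc k"
    by (cases m) auto
  have sum_k: "sum f {1..<m} + f m = Suc m"
    using sum_m by (simp add: m atLeastLessThanSuc_atLeastAtMost)
  have "f m \<le> 2"
    using assms(1) by (auto simp: admissible_def d m)
  moreover have "sum f {1..<m} + min (f m) 1 \<le> m" if "k \<noteq> 0"
  proof -
    have "m \<in> {2..d}"
      using that by (simp add: d m)
    then show ?thesis
      using assms(1) unfolding admissible_def by blast
  qed
  ultimately have "f m = 2"
    using sum_k by (cases "k = 0") (auto simp: m)
  then show ?thesis
    by (simp add: d)
qed

lemma admissible_extend_to_degree: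
  assumes "Poly_Mapping.keys \<alpha> \<subseteq> {1..d}" "admissible d (Poly_Mapping.lookup \<alpha>)"
    and "mdeg \<alpha> \<le> n" "n \<le> d"
  shows "\<exists>\<delta>. Poly_Mapping.keys \<delta> \<subseteq> {1..d} \<and> mdeg (\<alpha> + \<delta>) = n
    \<and> admissible d (Poly_Mapping.lookup (\<alpha> + \<delta>))"
  using assms(3,4)
proof (induction n)
  case 0
  then show ?case
    using assms(2) by (intro exI[of _ 0]) auto
next
  case (Suc n)
  show ?case
  proof (cases "mdeg \<alpha> = Suc n")
    case True
    then show ?thesis
      using assms(2) by (intro exI[of _ 0]) auto
  next
    case False
    then obtain \<delta> where \<delta>: "Poly_Mapping.keys \<delta> \<subseteq> {1..d}" "mdeg (\<alpha> + \<delta>) = n"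
      "admissible d (Poly_Mapping.lookup (\<alpha> + \<delta>))"
      using Suc by auto
    have "Poly_Mapping.keys (\<alpha> + \<delta>) \<subseteq> {1..d}"
      using assms(1) \<delta>(1) by (rule keys_add_subset)
    then have "sum (Poly_Mapping.lookup (\<alpha> + \<delta>)) {1..d} < d"
      using \<delta>(2) Suc.prems(2) mdeg_eq_sum[of "{1..d}" "\<alpha> + \<delta>"] by simp
    then obtain i where i: "i \<in> {1..d}"
      "admissible d ((Poly_Mapping.lookup (\<alpha> + \<delta>))(i := Suc (Poly_Mapping.lookup (\<alpha> + \<delta>) i)))"
      using admissible_extend[OF \<delta>(3)] by blast
    define \<beta> where "\<beta> = \<delta> + Poly_Mapping.single i 1"
    have "Poly_Mapping.keys \<beta> \<subseteq> {1..d}"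
      using \<delta>(1) i(1) unfolding \<beta>_def by (intro keys_add_subset) auto
    moreover have "mdeg (\<alpha> + \<beta>) = Suc n"
      using \<delta>(2) by (simp add: \<beta>_def mdeg_add mdeg_single)
    moreover have "admissible d (Poly_Mapping.lookup (\<alpha> + \<beta>))"
      using i(2) by (simp only: \<beta>_def add.assoc[symmetric] lookup_add_single)
    ultimately show ?thesis
      by blast
  qed
qed

lemma admissible_extend_to_full_degree:
  assumes "Poly_Mapping.keys \<alpha> \<subseteq> {1..d}" "admissible d (Poly_Mapping.lookup \<alpha>)" "mdeg \<alpha> < d"
  shows "\<exists>\<delta>. Poly_Mapping.keys \<delta> \<subseteq> {1..d} \<and> mdeg (\<alpha> + \<delta>) = d
    \<and> admissible d (Poly_Mapping.lookup (\<alpha> + \<delta>)) \<and> Poly_Mapping.lookup (\<alpha> + \<delta>) d \<noteq> 0"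
proof -
  obtain \<delta>\<^sub>0 where \<delta>\<^sub>0: "Poly_Mapping.keys \<delta>\<^sub>0 \<subseteq> {1..d}" "mdeg (\<alpha> + \<delta>\<^sub>0) \<le> d"
    "admissible d (Poly_Mapping.lookup (\<alpha> + \<delta>\<^sub>0))" "Poly_Mapping.lookup (\<alpha> + \<delta>\<^sub>0) d \<noteq> 0"
  proof (cases "Poly_Mapping.lookup \<alpha> d = 0")
    case True
    have "sum (Poly_Mapping.lookup \<alpha>) {1..<d} \<le> sum (Poly_Mapping.lookup \<alpha>) {1..d}"
      by (rule sum_mono2) auto
    also have "\<dots> = mdeg \<alpha>"
      using assms(1) by (simp add: mdeg_eq_sum[of "{1..d}"])
    finally have "sum (Poly_Mapping.lookup \<alpha>) {1..<d} \<le> mdeg \<alpha>" .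
    then have "admissible d ((Poly_Mapping.lookup \<alpha>)(d := Suc (Poly_Mapping.lookup \<alpha> d)))"
      using assms(2,3) True by (intro admissible_fun_upd_Suc) auto
    then show ?thesis
      using that[of "Poly_Mapping.single d 1"] assms(3) lookup_add_single[of \<alpha> d]
      by (simp add: mdeg_add mdeg_single)
  next
    case False
    then show ?thesis
      using that[of 0] assms by simp
  qed
  have "Poly_Mapping.keys (\<alpha> + \<delta>\<^sub>0) \<subseteq> {1..d}"
    using assms(1) \<delta>\<^sub>0(1) by (rule keys_add_subset)
  then obtain \<delta>\<^sub>1 where \<delta>\<^sub>1: "Poly_Mapping.keys \<delta>\<^sub>1 \<subseteq> {1..d}" "mdeg (\<alpha> + \<delta>\<^sub>0 + \<delta>\<^sub>1) = d"
    "admissible d (Poly_Mapping.lookup (\<alpha> + \<delta>\<^sub>0 + \<delta>\<^sub>1))"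
    using admissible_extend_to_degree[of "\<alpha> + \<delta>\<^sub>0" d d] \<delta>\<^sub>0(2,3) by auto
  have "Poly_Mapping.keys (\<delta>\<^sub>0 + \<delta>\<^sub>1) \<subseteq> {1..d}"
    using \<delta>\<^sub>0(1) \<delta>\<^sub>1(1) by (rule keys_add_subset)
  moreover have "Poly_Mapping.lookup (\<alpha> + \<delta>\<^sub>0 + \<delta>\<^sub>1) d \<noteq> 0"
    using \<delta>\<^sub>0(4) by (auto simp: lookup_add)
  ultimately show ?thesis
    using \<delta>\<^sub>1(2,3) by (intro exI[of _ "\<delta>\<^sub>0 + \<delta>\<^sub>1"]) (simp add: add.assoc)
qed

lemma ends_in_top_if_admissible:
  assumes "Poly_Mapping.keys \<beta> \<subseteq> {1..d}" "admissible d (Poly_Mapping.lookup \<beta>)" "1 \<le> d"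
    and "Poly_Mapping.lookup \<beta> d \<noteq> 0"
  shows "ends_in \<beta> d 1 \<or> ends_in \<beta> d 2"
proof -
  have "Poly_Mapping.lookup \<beta> d \<le> 2"
    using assms(2,3) by (simp add: admissible_def)
  then show ?thesis
    using assms(1,4) by (auto simp: ends_in_def)
qed

lemma admissible_extend_not_ending_in_square:
  assumes "Poly_Mapping.keys \<alpha> \<subseteq> {1..d}" "admissible d (Poly_Mapping.lookup \<alpha>)" "1 \<le> d"
    and "mdeg \<alpha> = d" "\<not> ends_in \<alpha> (d - 1) 2"
  shows "\<exists>i\<in>{1..d}. admissible d (Poly_Mapping.lookup (\<alpha> + Poly_Mapping.single i 1))"
proof -
  have sum: "sum (Poly_Mapping.lookup \<alpha>) {1..d} = d"
    using assms(1,4) by (simp add: mdeg_eq_sum[of "{1..d}"])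
  have "Poly_Mapping.lookup \<alpha> d \<noteq> 0"
  proof
    assume top: "Poly_Mapping.lookup \<alpha> d = 0"
    have "Poly_Mapping.keys \<alpha> \<subseteq> {1..d - 1}"
    proof
      fix x assume x: "x \<in> Poly_Mapping.keys \<alpha>"
      then have "x \<noteq> d"
        using top by (auto simp: in_keys_iff)
      moreover have "x \<in> {1..d}"
        using x assms(1) by blast
      ultimately show "x \<in> {1..d - 1}"
        by auto
    qed
    moreover have "Poly_Mapping.lookup \<alpha> (d - 1) = 2"
      using admissible_full_degree_top_zero[OF assms(2,3) sum top] .
    ultimately show False
      using assms(5) by (simp add: ends_in_def)
  qed
  then obtain i where "i \<in> {1..d}"
    "admissible d ((Poly_Mapping.lookup \<alpha>)(i := Suc (Poly_Mapping.lookup \<alpha> i)))"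
    using admissible_extend_past_full_degree[OF assms(2,3) sum] by blast
  then show ?thesis
    unfolding lookup_add_single by blast
qed

theorem mainTheorem11:
  fixes d :: nat and \<alpha> :: "nat \<Rightarrow>\<^sub>0 nat"
    and \<mu> :: "'a::field mpoly"
  assumes "d \<ge> 1"
    and "Poly_Mapping.keys \<alpha> \<subseteq> {1..d}" and "\<mu> = mon \<alpha>"
  shows "(\<mu> \<notin> K d \<and> mdeg \<alpha> \<le> d - 1 \<longrightarrow>
           (\<exists>\<beta>. Poly_Mapping.keys \<beta> \<subseteq> {1..d} \<and> (\<exists>q\<in>P d. (mon \<beta> :: 'a mpoly) = q * \<mu>)
              \<and> mdeg \<beta> = d \<and> (mon \<beta> :: 'a mpoly) \<notin> K d
              \<and> (ends_in \<beta> d 1 \<or> ends_in \<beta> d 2)))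
       \<and> (\<mu> \<notin> K d \<and> mdeg \<alpha> = d \<and> \<not> ends_in \<alpha> (d - 1) 2 \<longrightarrow>
           (\<exists>\<beta>. Poly_Mapping.keys \<beta> \<subseteq> {1..d} \<and> (\<exists>q\<in>P d. (mon \<beta> :: 'a mpoly) = q * \<mu>)
              \<and> mdeg \<beta> = d + 1 \<and> (mon \<beta> :: 'a mpoly) \<notin> K d))"
proof (intro conjI impI)
  have admissible_\<alpha>: "admissible d (Poly_Mapping.lookup \<alpha>)" if "\<mu> \<notin> K d"
    using that mon_notin_K_iff_admissible[OF assms(2)] assms(3) by blast
  show "\<exists>\<beta>. Poly_Mapping.keys \<beta> \<subseteq> {1..d} \<and> (\<exists>q\<in>P d. (mon \<beta> :: 'a mpoly) = q * \<mu>)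
      \<and> mdeg \<beta> = d \<and> (mon \<beta> :: 'a mpoly) \<notin> K d \<and> (ends_in \<beta> d 1 \<or> ends_in \<beta> d 2)"
    if hyp: "\<mu> \<notin> K d \<and> mdeg \<alpha> \<le> d - 1"
  proof -
    have "mdeg \<alpha> < d"
      using hyp assms(1) by linarith
    then obtain \<delta> where \<delta>: "Poly_Mapping.keys \<delta> \<subseteq> {1..d}" "mdeg (\<alpha> + \<delta>) = d"
      "admissible d (Poly_Mapping.lookup (\<alpha> + \<delta>))" "Poly_Mapping.lookup (\<alpha> + \<delta>) d \<noteq> 0"
      using admissible_extend_to_full_degree[OF assms(2) admissible_\<alpha>] hyp by blast
    have \<beta>: "Poly_Mapping.keys (\<alpha> + \<delta>) \<subseteq> {1..d}"
      using assms(2) \<delta>(1) by (rule keys_add_subset)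
    show ?thesis
      using \<beta> \<delta>(2) mon_add_eq_mult_mon[where \<alpha> = \<alpha>, OF \<delta>(1)] mon_notin_K_iff_admissible[OF \<beta>] \<delta>(3) assms(3)
        ends_in_top_if_admissible[OF \<beta> \<delta>(3) assms(1) \<delta>(4)] by blast
  qed
  show "\<exists>\<beta>. Poly_Mapping.keys \<beta> \<subseteq> {1..d} \<and> (\<exists>q\<in>P d. (mon \<beta> :: 'a mpoly) = q * \<mu>)
      \<and> mdeg \<beta> = d + 1 \<and> (mon \<beta> :: 'a mpoly) \<notin> K d"
    if hyp: "\<mu> \<notin> K d \<and> mdeg \<alpha> = d \<and> \<not> ends_in \<alpha> (d - 1) 2"
  proof -
    obtain i where i: "i \<in> {1..d}" "admissible d (Poly_Mapping.lookup (\<alpha> + Poly_Mapping.single i 1))"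
      using admissible_extend_not_ending_in_square[OF assms(2) admissible_\<alpha> assms(1)] hyp by blast
    then have \<delta>: "Poly_Mapping.keys (Poly_Mapping.single i 1) \<subseteq> {1..d}"
      by simp
    have \<beta>: "Poly_Mapping.keys (\<alpha> + Poly_Mapping.single i 1) \<subseteq> {1..d}"
      using assms(2) \<delta> by (rule keys_add_subset)
    show ?thesis
      using \<beta> mon_add_eq_mult_mon[where \<alpha> = \<alpha>, OF \<delta>] mon_notin_K_iff_admissible[OF \<beta>] i(2) hyp assms(3)
      by (intro exI[of _ "\<alpha> + Poly_Mapping.single i 1"]) (simp add: mdeg_add mdeg_single)
  qed
qed

end
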